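(* Let $k$ be a positive integer, $G$ a graph and $K$ a subgraph of $G$ with the following property: for every $s\ge1$, every cover $H$ of $G$ with respect to $L(v)=\{1,\dots,s\}$ for all $v$, and every $F=(f_1,\dots,f_s)$ with $f_i:V(G)\to\mathbb{Z}_{\ge0}$ and $|f(v)|\ge k$ for every vertex $v$, each DP-$F$-coloring of $K$ (with respect to the restriction of $H$ to the vertices over $V(K)$) can be extended to a DP-$F$-coloring of $(G,H)$. Let $H$ and $F$ be such a cover and such a function, and let $R_1$ be a DP-$F$-coloring of $K$. Then there exists a DP-$F$-coloring of $(G,H)$ with a strictly $F$-degenerate order $S$ such that the $|R_1|$ lowest-ordered elements of $S$ are the elements of $R_1$.
   Context: $|f(v)|=f_1(v)+\cdots+f_s(v)$. A cover $H$ of $G$ w.r.t. $L$ has vertex set $\{(u,c):c\in L(u)\}$, each $\{u\}\times L(u)$ is a clique, for each edge $uv$ the edges between $\{u\}\times L(u)$ and $\{v\}\times L(v)$ form a matching, and there are no such edges for non-adjacent $u,v$. A representative set contains exactly one vertex of each $\{v\}\times L(v)$. A DP-$F$-coloring is a representative set $R$ together with an ordering of $R$ (a strictly $F$-degenerate order) in which each $(v,i)\in R$ has fewer than $f_i(v)$ $H$-neighbors among earlier elements of $R$; extending a coloring means finding a DP-$F$-coloring of $(G,H)$ containing it. *)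

theory Defs
  imports Main
begin

definition graph :: "'a set \<Rightarrow> ('a \<Rightarrow> 'a \<Rightarrow> bool) \<Rightarrow> bool" where
  "graph V E \<longleftrightarrow> finite V \<and> (\<forall>u v. E u v \<longrightarrow> u \<in> V \<and> v \<in> V \<and> u \<noteq> v \<and> E v u)"

definition subgraph :: "'a set \<Rightarrow> ('a \<Rightarrow> 'a \<Rightarrow> bool) \<Rightarrow> 'a set \<Rightarrow> ('a \<Rightarrow> 'a \<Rightarrow> bool) \<Rightarrow> bool" where
  "subgraph VK EK V E \<longleftrightarrow> graph VK EK \<and> VK \<subseteq> V \<and> (\<forall>u v. EK u v \<longrightarrow> E u v)"

text \<open>A cover H (given by its edge relation HE on pairs (vertex, colour)) of the graph (V,E)
  with respect to the list assignment L(v) = {1..s} for every v.  The vertex set of H is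
  V \<times> {1..s}.\<close>
definition cover :: "'a set \<Rightarrow> ('a \<Rightarrow> 'a \<Rightarrow> bool) \<Rightarrow> nat \<Rightarrow> ('a \<times> nat \<Rightarrow> 'a \<times> nat \<Rightarrow> bool) \<Rightarrow> bool" where
  "cover V E s HE \<longleftrightarrow>
     (\<forall>x y. HE x y \<longrightarrow> x \<in> V \<times> {1..s} \<and> y \<in> V \<times> {1..s} \<and> x \<noteq> y \<and> HE y x) \<and>
     (\<forall>u\<in>V. \<forall>c\<in>{1..s}. \<forall>c'\<in>{1..s}. c \<noteq> c' \<longrightarrow> HE (u,c) (u,c')) \<and>
     (\<forall>u v c c'. HE (u,c) (v,c') \<longrightarrow> u = v \<or> E u v) \<and>
     (\<forall>u v c c1 c2. u \<noteq> v \<longrightarrow> HE (u,c) (v,c1) \<longrightarrow> HE (u,c) (v,c2) \<longrightarrow> c1 = c2)"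

text \<open>A DP-F-colouring of the vertex set U w.r.t. (the subgraph of) the cover HE induced on
  U \<times> {1..s}: a representative set given together with a strictly F-degenerate order,
  encoded as the list S of its elements in that order.  f i v is f_i(v).\<close>
definition dp_coloring :: "'a set \<Rightarrow> nat \<Rightarrow> ('a \<times> nat \<Rightarrow> 'a \<times> nat \<Rightarrow> bool) \<Rightarrow> (nat \<Rightarrow> 'a \<Rightarrow> nat) \<Rightarrow> ('a \<times> nat) list \<Rightarrow> bool" where
  "dp_coloring U s HE f S \<longleftrightarrow>
     distinct (map fst S) \<and> set (map fst S) = U \<and> (\<forall>x\<in>set S. snd x \<in> {1..s}) \<and>
     (\<forall>j < length S. card {l. l < j \<and> HE (S ! l) (S ! j)} < f (snd (S ! j)) (fst (S ! j)))"

definition extends_coloring :: "'a set \<Rightarrow> nat \<Rightarrow> ('a \<times> nat \<Rightarrow> 'a \<times> nat \<Rightarrow> bool) \<Rightarrow> (nat \<Rightarrow> 'a \<Rightarrow> nat) \<Rightarrow> ('a \<times> nat) list \<Rightarrow> bool" where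
  "extends_coloring V s HE f R \<longleftrightarrow> (\<exists>S. dp_coloring V s HE f S \<and> set R \<subseteq> set S)"

end

theory Submission
  imports Defs
begin

text \<open>Add a new colour s+1. In the auxiliary cover the edges between elements of R1 are deleted
  and every fibre {v} \<times> {1..s+1} is a clique; the auxiliary weights give a vertex of K weight 1
  on every old colour and k on the new one, and give the new colour weight 0 outside K. Then R1
  is trivially a DP-coloring of K for the auxiliary instance, so by hypothesis it extends to an
  ordering S of the whole auxiliary cover. Weight 1 means that no element of R1 has an earlier
  auxiliary neighbour in S, so every H-neighbour in R1 of an element x outside R1 precedes x in
  S; weight 0 means that x carries an old colour at a vertex outside K. Hence moving R1 to the
  front of S gives no element more earlier H-neighbours than it had in S, and the result is a
  DP-F-coloring of (G,H) that starts with R1.\<close>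

definition strictly_degenerate :: "('b \<Rightarrow> 'b \<Rightarrow> bool) \<Rightarrow> ('b \<Rightarrow> nat) \<Rightarrow> 'b list \<Rightarrow> bool" where
  "strictly_degenerate A w S \<longleftrightarrow> (\<forall>xs x ys. S = xs @ x # ys \<longrightarrow> card {y \<in> set xs. A y x} < w x)"

lemma card_nth_less_eq_card_take:
  assumes "distinct xs" "j \<le> length xs"
  shows "card {l. l < j \<and> P (xs ! l)} = card {y \<in> set (take j xs). P y}"
proof -
  have "{y \<in> set (take j xs). P y} = (!) xs ` {l. l < j \<and> P (xs ! l)}"
    using assms(2) by (force simp: in_set_conv_nth)
  moreover have "inj_on ((!) xs) {l. l < j \<and> P (xs ! l)}"
    using assms by (auto simp: inj_on_def nth_eq_iff_index_eq)
  ultimately show ?thesis by (simp add: card_image)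
qed

lemma strictly_degenerate_conv_nth:
  assumes "distinct S"
  shows "strictly_degenerate A w S \<longleftrightarrow>
    (\<forall>j < length S. card {l. l < j \<and> A (S ! l) (S ! j)} < w (S ! j))"
proof
  assume deg: "strictly_degenerate A w S"
  show "\<forall>j < length S. card {l. l < j \<and> A (S ! l) (S ! j)} < w (S ! j)"
  proof (intro allI impI)
    fix j assume j: "j < length S"
    have "card {y \<in> set (take j S). A y (S ! j)} < w (S ! j)"
      using deg[unfolded strictly_degenerate_def, rule_format, OF id_take_nth_drop[OF j]] .
    then show "card {l. l < j \<and> A (S ! l) (S ! j)} < w (S ! j)"
      using card_nth_less_eq_card_take[OF assms less_imp_le[OF j], of "\<lambda>y. A y (S ! j)"]
      by simp
  qed
next
  assume nth: "\<forall>j < length S. card {l. l < j \<and> A (S ! l) (S ! j)} < w (S ! j)"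
  show "strictly_degenerate A w S"
    unfolding strictly_degenerate_def
  proof (intro allI impI)
    fix xs x ys assume S: "S = xs @ x # ys"
    then have "length xs < length S" "S ! length xs = x" "take (length xs) S = xs" by simp_all
    then show "card {y \<in> set xs. A y x} < w x"
      using nth[rule_format, of "length xs"]
        card_nth_less_eq_card_take[OF assms, of "length xs" "\<lambda>y. A y x"] by simp
  qed
qed

abbreviation colour_weight :: "(nat \<Rightarrow> 'a \<Rightarrow> nat) \<Rightarrow> 'a \<times> nat \<Rightarrow> nat" where
  "colour_weight f x \<equiv> f (snd x) (fst x)"

lemma dp_coloring_iff_strictly_degenerate:
  "dp_coloring U s HE f S \<longleftrightarrow>
    distinct (map fst S) \<and> fst ` set S = U \<and> (\<forall>x\<in>set S. snd x \<in> {1..s}) \<and>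
    strictly_degenerate HE (colour_weight f) S"
proof (cases "distinct S")
  case True
  then show ?thesis unfolding dp_coloring_def by (simp add: strictly_degenerate_conv_nth)
next
  case False
  then show ?thesis unfolding dp_coloring_def by (simp add: distinct_map)
qed

lemma strictly_degenerate_weight_pos:
  assumes "strictly_degenerate A w S" "x \<in> set S"
  shows "0 < w x"
proof -
  obtain xs ys where "S = xs @ x # ys" using split_list[OF assms(2)] by blast
  from assms(1)[unfolded strictly_degenerate_def, rule_format, OF this] show ?thesis by simp
qed

lemma strictly_degenerate_weight_le_one:
  assumes "strictly_degenerate A w (xs @ x # ys)" "w x \<le> 1" "y \<in> set xs"
  shows "\<not> A y x"
proof
  assume "A y x"
  have "card {y \<in> set xs. A y x} < w x"
    using assms(1)[unfolded strictly_degenerate_def, rule_format, OF refl] .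
  with assms(2) have "card {y \<in> set xs. A y x} = 0" by linarith
  then have "{y \<in> set xs. A y x} = {}" by simp
  with \<open>A y x\<close> assms(3) show False by blast
qed

lemma filter_eq_append_ConsD:
  assumes "filter P S = ts @ x # ys"
  shows "\<exists>S1 S2. S = S1 @ x # S2 \<and> filter P S1 = ts"
  using assms
proof (induction ts arbitrary: S)
  case Nil
  then obtain us vs where "S = us @ x # vs" "\<forall>u\<in>set us. \<not> P u"
    using filter_eq_ConsD[of P S x ys] by auto
  then show ?case by (auto intro: filter_False)
next
  case (Cons t ts)
  then obtain us vs where "S = us @ t # vs" "\<forall>u\<in>set us. \<not> P u" "P t"
      "filter P vs = ts @ x # ys"
    by (auto dest: filter_eq_ConsD)
  moreover from Cons.IH[OF this(4)] obtain V1 V2 where "vs = V1 @ x # V2" "filter P V1 = ts"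
    by blast
  ultimately show ?case
    by (intro exI[of _ "us @ t # V1"] exI[of _ V2]) (simp add: filter_False)
qed

definition move_to_front :: "'b list \<Rightarrow> 'b list \<Rightarrow> 'b list" where
  "move_to_front R S = R @ filter (\<lambda>x. x \<notin> set R) S"

lemma set_move_to_front: "set R \<subseteq> set S \<Longrightarrow> set (move_to_front R S) = set S"
  by (auto simp: move_to_front_def)

lemma distinct_map_move_to_front:
  "distinct (map g S) \<Longrightarrow> distinct R \<Longrightarrow> set R \<subseteq> set S \<Longrightarrow>
    distinct (map g (move_to_front R S))"
  by (simp add: distinct_map set_move_to_front) (auto simp: move_to_front_def)

lemma strictly_degenerate_move_to_front:
  assumes deg_R: "strictly_degenerate A w R"
    and deg_S: "strictly_degenerate A' w' S"
    and "set R \<subseteq> set S"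
    and A_A': "\<And>x y. A y x \<Longrightarrow> \<not> (x \<in> set R \<and> y \<in> set R) \<Longrightarrow> A' y x"
    and "symp A'"
    and weight_R: "\<And>y. y \<in> set R \<Longrightarrow> w' y \<le> 1"
    and weight_rest: "\<And>x. x \<in> set S \<Longrightarrow> x \<notin> set R \<Longrightarrow> w' x \<le> w x"
  shows "strictly_degenerate A w (move_to_front R S)"
  unfolding strictly_degenerate_def move_to_front_def
proof (intro allI impI)
  fix xs x ys assume "R @ filter (\<lambda>x. x \<notin> set R) S = xs @ x # ys"
  then consider (front) zs where "R = xs @ x # zs"
    | (rest) ts where "xs = R @ ts" "filter (\<lambda>x. x \<notin> set R) S = ts @ x # ys"
    by (auto simp: append_eq_append_conv2 append_eq_Cons_conv)
  then show "card {y \<in> set xs. A y x} < w x"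
  proof cases
    case front
    then show ?thesis using deg_R by (simp add: strictly_degenerate_def)
  next
    case rest
    then obtain S1 S2 where S: "S = S1 @ x # S2" and ts: "filter (\<lambda>x. x \<notin> set R) S1 = ts"
      by (blast dest: filter_eq_append_ConsD)
    have "x \<in> set (filter (\<lambda>x. x \<notin> set R) S)" using rest(2) by simp
    then have x: "x \<notin> set R" "x \<in> set S" by simp_all
    have "{y \<in> set xs. A y x} \<subseteq> {y \<in> set S1. A' y x}"
    proof safe
      fix y assume y: "y \<in> set xs" "A y x"
      then show "A' y x" using A_A' x(1) by blast
      show "y \<in> set S1"
      proof (rule ccontr)
        assume "y \<notin> set S1"
        with y(1) rest(1) ts have "y \<in> set R" by auto
        with \<open>y \<notin> set S1\<close> x(1) \<open>set R \<subseteq> set S\<close> have "y \<in> set S2"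
          using S by auto
        then obtain zs1 zs2 where "S2 = zs1 @ y # zs2" by (blast dest: split_list)
        then have "\<not> A' x y"
          using strictly_degenerate_weight_le_one[of A' w' "S1 @ x # zs1" y zs2 x] deg_S S
            weight_R[OF \<open>y \<in> set R\<close>] by simp
        with \<open>A' y x\<close> \<open>symp A'\<close> show False by (blast dest: sympD)
      qed
    qed
    then have "card {y \<in> set xs. A y x} \<le> card {y \<in> set S1. A' y x}"
      by (intro card_mono) auto
    also have "\<dots> < w' x" using deg_S S by (simp add: strictly_degenerate_def)
    also have "\<dots> \<le> w x" using weight_rest x by simp
    finally show ?thesis .
  qed
qed

lemma dp_coloring_move_to_front:
  assumes R: "dp_coloring VK s HE f R"
    and S: "dp_coloring V s' HE' f' S"
    and "set R \<subseteq> set S"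
    and "\<And>x y. HE y x \<Longrightarrow> \<not> (x \<in> set R \<and> y \<in> set R) \<Longrightarrow> HE' y x"
    and "symp HE'"
    and "\<And>y. y \<in> set R \<Longrightarrow> colour_weight f' y \<le> 1"
    and rest: "\<And>x. x \<in> set S \<Longrightarrow> x \<notin> set R \<Longrightarrow>
      colour_weight f' x \<le> colour_weight f x \<and> snd x \<in> {1..s}"
  shows "dp_coloring V s HE f (move_to_front R S)"
proof -
  from R have R': "distinct (map fst R)" "\<forall>x\<in>set R. snd x \<in> {1..s}"
      "strictly_degenerate HE (colour_weight f) R"
    by (simp_all add: dp_coloring_iff_strictly_degenerate)
  from S have S': "distinct (map fst S)" "fst ` set S = V"
      "strictly_degenerate HE' (colour_weight f') S"
    by (simp_all add: dp_coloring_iff_strictly_degenerate)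
  have "strictly_degenerate HE (colour_weight f) (move_to_front R S)"
    using strictly_degenerate_move_to_front[OF R'(3) S'(3) \<open>set R \<subseteq> set S\<close>] assms(4-6) rest
    by blast
  moreover have "distinct (map fst (move_to_front R S))"
    using S'(1) R'(1) \<open>set R \<subseteq> set S\<close> by (intro distinct_map_move_to_front) (auto simp: distinct_map)
  ultimately show ?thesis
    using S'(2) R'(2) rest \<open>set R \<subseteq> set S\<close>
    by (auto simp: dp_coloring_iff_strictly_degenerate set_move_to_front)
qed

lemma symp_cover: "cover V E s HE \<Longrightarrow> symp HE"
  by (auto simp: cover_def symp_def)

fun augmented_cover ::
  "'a set \<Rightarrow> nat \<Rightarrow> ('a \<times> nat) set \<Rightarrow> ('a \<times> nat \<Rightarrow> 'a \<times> nat \<Rightarrow> bool) \<Rightarrow> 'a \<times> nat \<Rightarrow> 'a \<times> nat \<Rightarrow> bool"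
  where
  "augmented_cover V s R HE (u, c) (v, d) \<longleftrightarrow>
     HE (u, c) (v, d) \<and> \<not> ((u, c) \<in> R \<and> (v, d) \<in> R) \<or>
     u = v \<and> u \<in> V \<and> c \<noteq> d \<and> c \<in> {1..Suc s} \<and> d \<in> {1..Suc s}"

definition augmented_weights :: "'a set \<Rightarrow> nat \<Rightarrow> nat \<Rightarrow> (nat \<Rightarrow> 'a \<Rightarrow> nat) \<Rightarrow> nat \<Rightarrow> 'a \<Rightarrow> nat" where
  "augmented_weights VK k s f i u =
     (if u \<in> VK then (if i = Suc s then k else 1) else (if i = Suc s then 0 else f i u))"

lemma cover_augmented_cover:
  assumes "cover V E s HE"
  shows "cover V E (Suc s) (augmented_cover V s R HE)"
proof -
  let ?H = "augmented_cover V s R HE"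
  from assms have HE: "\<And>x y. HE x y \<Longrightarrow> x \<in> V \<times> {1..s} \<and> y \<in> V \<times> {1..s} \<and> x \<noteq> y \<and> HE y x"
    and HE_edge: "\<And>u v c d. HE (u, c) (v, d) \<Longrightarrow> u = v \<or> E u v"
    and HE_matching: "\<And>u v c c1 c2. u \<noteq> v \<Longrightarrow> HE (u, c) (v, c1) \<Longrightarrow> HE (u, c) (v, c2) \<Longrightarrow> c1 = c2"
    unfolding cover_def by blast+
  have "x \<in> V \<times> {1..Suc s} \<and> y \<in> V \<times> {1..Suc s} \<and> x \<noteq> y \<and> ?H y x" if "?H x y" for x y
    using that HE[of x y] by (cases x, cases y) auto
  moreover have "?H (u, c) (v, d) \<Longrightarrow> u = v \<or> E u v" for u v c d
    using HE_edge by auto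
  moreover have "u \<noteq> v \<Longrightarrow> ?H (u, c) (v, c1) \<Longrightarrow> ?H (u, c) (v, c2) \<Longrightarrow> c1 = c2" for u v c c1 c2
    using HE_matching by auto
  ultimately show ?thesis unfolding cover_def by auto
qed

lemma sum_augmented_weights:
  assumes "k \<le> (\<Sum>i=1..s. f i v)"
  shows "k \<le> (\<Sum>i=1..Suc s. augmented_weights VK k s f i v)"
proof (cases "v \<in> VK")
  case True
  then show ?thesis by (simp add: augmented_weights_def)
next
  case False
  then have "(\<Sum>i=1..s. augmented_weights VK k s f i v) = (\<Sum>i=1..s. f i v)"
    by (intro sum.cong) (auto simp: augmented_weights_def)
  with False assms show ?thesis by (simp add: augmented_weights_def)
qed

lemma dp_coloring_augmented:
  assumes "dp_coloring VK s HE f R"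
  shows "dp_coloring VK (Suc s) (augmented_cover V s (set R) HE) (augmented_weights VK k s f) R"
proof -
  from assms have R: "distinct (map fst R)" "fst ` set R = VK" "\<forall>x\<in>set R. snd x \<in> {1..s}"
    by (simp_all add: dp_coloring_iff_strictly_degenerate)
  have "strictly_degenerate (augmented_cover V s (set R) HE)
      (colour_weight (augmented_weights VK k s f)) R"
    unfolding strictly_degenerate_def
  proof (intro allI impI)
    fix xs x ys assume split: "R = xs @ x # ys"
    have "\<not> augmented_cover V s (set R) HE y x" if "y \<in> set xs" for y
    proof -
      have "fst x \<notin> fst ` set xs" using R(1) split by simp
      with that have "fst y \<noteq> fst x" by (metis imageI)
      then show ?thesis using split that by (cases x, cases y) auto
    qed
    moreover have "colour_weight (augmented_weights VK k s f) x = 1"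
      using R(2,3) split by (auto simp: augmented_weights_def)
    ultimately show "card {y \<in> set xs. augmented_cover V s (set R) HE y x}
        < colour_weight (augmented_weights VK k s f) x" by simp
  qed
  with R show ?thesis by (auto simp: dp_coloring_iff_strictly_degenerate)
qed

lemma augmented_weights_extension_outside:
  assumes S: "dp_coloring V (Suc s) HE' (augmented_weights VK k s f) S"
    and "set R \<subseteq> set S" "fst ` set R = VK" "x \<in> set S" "x \<notin> set R"
  shows "fst x \<notin> VK" "snd x \<in> {1..s}"
proof -
  from S have inj: "inj_on fst (set S)" and colours: "snd x \<in> {1..Suc s}"
    and deg: "strictly_degenerate HE' (colour_weight (augmented_weights VK k s f)) S"
    using \<open>x \<in> set S\<close> by (auto simp: dp_coloring_iff_strictly_degenerate distinct_map)
  show "fst x \<notin> VK"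
  proof
    assume "fst x \<in> VK"
    then obtain r where "r \<in> set R" "fst r = fst x" using \<open>fst ` set R = VK\<close> by force
    with inj assms(2,4,5) show False by (metis inj_onD subsetD)
  qed
  moreover have "0 < colour_weight (augmented_weights VK k s f) x"
    using strictly_degenerate_weight_pos[OF deg \<open>x \<in> set S\<close>] .
  ultimately show "snd x \<in> {1..s}"
    using colours by (auto simp: augmented_weights_def split: if_splits)
qed

theorem lemma5:
  fixes k :: nat and V VK :: "'a set" and E EK :: "'a \<Rightarrow> 'a \<Rightarrow> bool"
    and s :: nat and HE :: "'a \<times> nat \<Rightarrow> 'a \<times> nat \<Rightarrow> bool" and f :: "nat \<Rightarrow> 'a \<Rightarrow> nat"
    and R1 :: "('a \<times> nat) list"
  assumes "k > 0"
    and "graph V E"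
    and "subgraph VK EK V E"
    and hyp_ext: "\<forall>s' HE' f'. s' \<ge> 1 \<longrightarrow> cover V E s' HE' \<longrightarrow>
                 (\<forall>v\<in>V. (\<Sum>i=1..s'. f' i v) \<ge> k) \<longrightarrow>
                 (\<forall>R. dp_coloring VK s' HE' f' R \<longrightarrow> extends_coloring V s' HE' f' R)"
    and "s \<ge> 1"
    and "cover V E s HE"
    and "\<forall>v\<in>V. (\<Sum>i=1..s. f i v) \<ge> k"
    and "dp_coloring VK s HE f R1"
  shows "\<exists>S. dp_coloring V s HE f S \<and> set (take (length R1) S) = set R1"
proof -
  let ?HE' = "augmented_cover V s (set R1) HE" and ?f' = "augmented_weights VK k s f"
  have "\<forall>v\<in>V. (\<Sum>i=1..Suc s. ?f' i v) \<ge> k"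
    using assms(7) by (blast intro: sum_augmented_weights)
  then have "extends_coloring V (Suc s) ?HE' ?f' R1"
    using hyp_ext[rule_format, OF _ cover_augmented_cover[OF \<open>cover V E s HE\<close>]]
      dp_coloring_augmented[OF \<open>dp_coloring VK s HE f R1\<close>] by simp
  then obtain S where S: "dp_coloring V (Suc s) ?HE' ?f' S" and "set R1 \<subseteq> set S"
    unfolding extends_coloring_def by blast
  from \<open>dp_coloring VK s HE f R1\<close> have R1: "fst ` set R1 = VK" "\<forall>x\<in>set R1. snd x \<in> {1..s}"
    by (simp_all add: dp_coloring_iff_strictly_degenerate)
  note outside = augmented_weights_extension_outside[OF S \<open>set R1 \<subseteq> set S\<close> R1(1)]
  have "dp_coloring V s HE f (move_to_front R1 S)"
  proof (rule dp_coloring_move_to_front[OF \<open>dp_coloring VK s HE f R1\<close> S \<open>set R1 \<subseteq> set S\<close>])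
    show "?HE' y x" if "HE y x" "\<not> (x \<in> set R1 \<and> y \<in> set R1)" for x y
      using that by (cases x, cases y) auto
    show "symp ?HE'" using cover_augmented_cover[OF \<open>cover V E s HE\<close>] by (rule symp_cover)
    show "colour_weight ?f' y \<le> 1" if "y \<in> set R1" for y
      using that R1 by (auto simp: augmented_weights_def)
    show "colour_weight ?f' x \<le> colour_weight f x \<and> snd x \<in> {1..s}"
      if "x \<in> set S" "x \<notin> set R1" for x
      using outside[OF that] by (simp add: augmented_weights_def)
  qed
  then show ?thesis by (intro exI[of _ "move_to_front R1 S"]) (simp add: move_to_front_def)
qed

end
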